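(* Assume $\mathcal{Z}$ is norm-Euclidean. Then for every $m\ge1$, $\sigma(m):=\sup_{|s|=m}\operatorname{diam}C_s\le2\operatorname{rad}(K)^{2m+1}$; in particular $\sigma(m)\to0$ as $m\to\infty$.
   Context: $X=\mathbb{R}^d$ (including $\mathbb{C},\mathbb{H},\mathbb{O}$ as $\mathbb{R}^2,\mathbb{R}^4,\mathbb{R}^8$) with Euclidean norm and distance $d$. $\iota:X\setminus\{0\}\to X\setminus\{0\}$ satisfies $|\iota x|=1/|x|$, $d(\iota x,\iota y)=d(x,y)/(|x||y|)$ and $\iota\circ\iota=\mathrm{id}$; $\iota(0)=0$. $\mathcal{Z}$ is a discrete additive subgroup with compact quotient, $K=\{x:d(x,0)\le d(x,z)\ \forall z\in\mathcal{Z}\}$ its Dirichlet region with a boundary choice so each $x$ has a unique $[x]\in\mathcal{Z}$ with $x-[x]\in K$; $\operatorname{rad}(K)=\sup_{x\in K}|x|$, and norm-Euclidean means $\operatorname{rad}(K)<1$. $Tx=\iota x-[\iota x]$ ($x\ne0$), $T0=0$. Cylinders: $C_\emptyset=K$, $C_{as}=K\cap\iota(C_s+a)$ for $a\in\mathcal{Z}$; the supremum is over digit strings $s$ of length $m$ (with $\operatorname{diam}\emptyset=0$). *)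

theory Defs
  imports "HOL-Analysis.Analysis"
begin

text \<open>Dirichlet region of the additive subgroup Z (closed version, before boundary choice).\<close>
definition dirichlet :: "'a::euclidean_space set \<Rightarrow> 'a set" where
  "dirichlet Z = {x. \<forall>z\<in>Z. dist x 0 \<le> dist x z}"

definition rad :: "'a::euclidean_space set \<Rightarrow> real" where
  "rad K = Sup (norm ` K)"

fun cyl :: "('a::euclidean_space \<Rightarrow> 'a) \<Rightarrow> 'a set \<Rightarrow> 'a list \<Rightarrow> 'a set" where
  "cyl \<iota> K [] = K"
| "cyl \<iota> K (a # s) = K \<inter> \<iota> ` ((\<lambda>x. x + a) ` cyl \<iota> K s)"

definition sigma :: "('a::euclidean_space \<Rightarrow> 'a) \<Rightarrow> 'a set \<Rightarrow> 'a set \<Rightarrow> nat \<Rightarrow> real" where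
  "sigma \<iota> Z K m = Sup {diameter (cyl \<iota> K s) | s. set s \<subseteq> Z \<and> length s = m}"

end

theory Submission
  imports Defs
begin

text \<open>Write \<open>r = rad K < 1\<close>. Since \<open>\<iota>\<close> scales the distance of two nonzero points by the
  reciprocal of the product of their norms, and \<open>\<iota>\<close> maps a cylinder \<open>C\<^sub>a\<^sub>s \<subseteq> K\<close> with \<open>a \<noteq> 0\<close>
  into the translate \<open>C\<^sub>s + a\<close>, we get \<open>diam C\<^sub>a\<^sub>s \<le> r\<^sup>2 diam C\<^sub>s\<close>. The digit \<open>0\<close> only produces
  cylinders inside \<open>{0}\<close>: a nonzero \<open>x\<close> with \<open>x, \<iota> x \<in> K\<close> would give \<open>1 \<le> r\<^sup>2\<close>. Starting from
  \<open>diam K \<le> 2r\<close>, induction gives \<open>diam C\<^sub>s \<le> 2r\<^bsup>2|s|+1\<^esup>\<close>.\<close>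

lemma dirichlet_lattice_point_eq_0:
  assumes "z \<in> Z" "z \<in> dirichlet Z"
  shows "z = 0"
  using assms unfolding dirichlet_def by fastforce

lemma bounded_dirichlet:
  assumes "compact C" and "\<And>x. \<exists>z\<in>Z. x - z \<in> C"
  shows "bounded (dirichlet Z)"
proof -
  obtain R where R: "\<And>c. c \<in> C \<Longrightarrow> norm c \<le> R"
    using compact_imp_bounded[OF \<open>compact C\<close>] by (meson bounded_iff)
  have "norm x \<le> R" if "x \<in> dirichlet Z" for x
  proof -
    obtain z where "z \<in> Z" "x - z \<in> C" using assms(2) by blast
    then have "norm x \<le> norm (x - z)"
      using that unfolding dirichlet_def by (auto simp: dist_norm)
    also have "\<dots> \<le> R" using R \<open>x - z \<in> C\<close> .
    finally show ?thesis .
  qed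
  then show ?thesis by (meson bounded_iff)
qed

lemma norm_le_rad:
  assumes "bounded K" "x \<in> K"
  shows "norm x \<le> rad K"
  unfolding rad_def
  using assms by (intro cSup_upper) (auto simp: bounded_iff bdd_above_def)

lemma rad_nonneg:
  assumes "bounded K" "K \<noteq> {}"
  shows "0 \<le> rad K"
  using assms norm_le_rad[OF \<open>bounded K\<close>] by (meson ex_in_conv norm_ge_zero order_trans)

lemma diameter_le_2_rad:
  assumes "bounded K" "K \<noteq> {}"
  shows "diameter K \<le> 2 * rad K"
proof (rule diameter_le)
  fix x y assume "x \<in> K" "y \<in> K"
  then have "norm x \<le> rad K" "norm y \<le> rad K"
    using norm_le_rad[OF \<open>bounded K\<close>] by auto
  then show "norm (x - y) \<le> 2 * rad K"
    using norm_triangle_ineq4[of x y] by linarith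
qed (use \<open>K \<noteq> {}\<close> in simp)

lemma cyl_subset: "cyl \<iota> K s \<subseteq> K"
  by (cases s) auto

locale inversion =
  fixes \<iota> :: "'a::euclidean_space \<Rightarrow> 'a"
  assumes inversion_nonzero: "x \<noteq> 0 \<Longrightarrow> \<iota> x \<noteq> 0"
    and norm_inversion: "x \<noteq> 0 \<Longrightarrow> norm (\<iota> x) = 1 / norm x"
    and dist_inversion: "x \<noteq> 0 \<Longrightarrow> y \<noteq> 0 \<Longrightarrow> dist (\<iota> x) (\<iota> y) = dist x y / (norm x * norm y)"
    and inversion_inversion: "x \<noteq> 0 \<Longrightarrow> \<iota> (\<iota> x) = x"
    and inversion_0: "\<iota> 0 = 0"
begin

lemma dist_eq_dist_inversion_mult:
  assumes "x \<noteq> 0" "y \<noteq> 0"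
  shows "dist x y = dist (\<iota> x) (\<iota> y) * (norm x * norm y)"
proof -
  have "dist x y = dist (\<iota> (\<iota> x)) (\<iota> (\<iota> y))"
    using assms by (simp add: inversion_inversion)
  also have "\<dots> = dist (\<iota> x) (\<iota> y) / (norm (\<iota> x) * norm (\<iota> y))"
    using assms by (simp add: dist_inversion inversion_nonzero)
  finally show ?thesis
    using assms by (simp add: norm_inversion)
qed

lemma cyl_Cons_cases:
  assumes "x \<in> cyl \<iota> K (a # s)"
  obtains "x \<noteq> 0" "\<iota> x - a \<in> cyl \<iota> K s"
  | "x = 0" "- a \<in> cyl \<iota> K s"
proof -
  obtain y where y: "y \<in> cyl \<iota> K s" "x = \<iota> (y + a)" using assms by auto
  show ?thesis
  proof (cases "y + a = 0")
    case True
    then have "y = - a" by (simp add: add_eq_0_iff2)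
    then show ?thesis using that True y by (simp add: inversion_0)
  next
    case False
    then show ?thesis
      using that y by (simp add: inversion_nonzero inversion_inversion)
  qed
qed

lemma cyl_Cons_zero_subset:
  assumes "bounded K" "rad K < 1"
  shows "cyl \<iota> K (0 # s) \<subseteq> {0}"
proof
  fix x assume x: "x \<in> cyl \<iota> K (0 # s)"
  show "x \<in> {0}"
  proof (cases rule: cyl_Cons_cases[OF x])
    case 1
    have "x \<in> K" "\<iota> x \<in> K" using x 1 cyl_subset by auto
    then have "norm x \<le> rad K" "1 / norm x \<le> rad K"
      using norm_le_rad[OF \<open>bounded K\<close>] norm_inversion[OF \<open>x \<noteq> 0\<close>] by metis+
    have "0 \<le> rad K" using \<open>norm x \<le> rad K\<close> norm_ge_zero order_trans by blast
    have "1 = norm x * (1 / norm x)" using \<open>x \<noteq> 0\<close> by simp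
    also have "\<dots> \<le> rad K * rad K"
      using \<open>norm x \<le> rad K\<close> \<open>1 / norm x \<le> rad K\<close> \<open>0 \<le> rad K\<close> by (intro mult_mono) auto
    also have "\<dots> \<le> rad K" using \<open>0 \<le> rad K\<close> \<open>rad K < 1\<close> by (simp add: mult_left_le)
    finally show ?thesis using \<open>rad K < 1\<close> by simp
  qed simp
qed

lemma diameter_cyl_Cons_le:
  assumes "bounded K" "- a \<notin> cyl \<iota> K s"
  shows "diameter (cyl \<iota> K (a # s)) \<le> rad K ^ 2 * diameter (cyl \<iota> K s)"
proof (rule diameter_le)
  have bounded_cyl: "bounded (cyl \<iota> K s)"
    using bounded_subset[OF \<open>bounded K\<close> cyl_subset] .
  then show "cyl \<iota> K (a # s) \<noteq> {} \<or> 0 \<le> rad K ^ 2 * diameter (cyl \<iota> K s)"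
    by (simp add: diameter_ge_0)
  fix x y assume x: "x \<in> cyl \<iota> K (a # s)" and y: "y \<in> cyl \<iota> K (a # s)"
  have "x \<noteq> 0" "\<iota> x - a \<in> cyl \<iota> K s" "y \<noteq> 0" "\<iota> y - a \<in> cyl \<iota> K s"
    using cyl_Cons_cases[OF x] cyl_Cons_cases[OF y] \<open>- a \<notin> cyl \<iota> K s\<close> by metis+
  have "norm x \<le> rad K" "norm y \<le> rad K"
    using x y cyl_subset norm_le_rad[OF \<open>bounded K\<close>] by (metis in_mono)+
  have "norm (x - y) = dist (\<iota> x - a) (\<iota> y - a) * (norm x * norm y)"
    using dist_eq_dist_inversion_mult[OF \<open>x \<noteq> 0\<close> \<open>y \<noteq> 0\<close>] by (simp add: dist_norm)
  also have "\<dots> \<le> diameter (cyl \<iota> K s) * (rad K * rad K)"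
    using diameter_bounded_bound[OF bounded_cyl \<open>\<iota> x - a \<in> _\<close> \<open>\<iota> y - a \<in> _\<close>]
      \<open>norm x \<le> rad K\<close> \<open>norm y \<le> rad K\<close> diameter_ge_0[OF bounded_cyl]
    by (intro mult_mono) (auto intro: mult_mono order_trans[OF norm_ge_zero])
  finally show "norm (x - y) \<le> rad K ^ 2 * diameter (cyl \<iota> K s)"
    by (simp add: power2_eq_square mult.commute)
qed

lemma diameter_cyl_le:
  assumes "bounded K" "K \<noteq> {}" "rad K < 1"
    and digits: "\<And>a. a \<in> set s \<Longrightarrow> - a \<in> K \<Longrightarrow> a = 0"
  shows "diameter (cyl \<iota> K s) \<le> 2 * rad K ^ (2 * length s + 1)"
  using digits
proof (induction s)
  case Nil
  then show ?case using diameter_le_2_rad[OF \<open>bounded K\<close> \<open>K \<noteq> {}\<close>] by simp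
next
  case (Cons a s)
  have r: "0 \<le> rad K" using rad_nonneg[OF \<open>bounded K\<close> \<open>K \<noteq> {}\<close>] .
  show ?case
  proof (cases "a = 0")
    case True
    then have "diameter (cyl \<iota> K (a # s)) = 0"
      using cyl_Cons_zero_subset[OF \<open>bounded K\<close> \<open>rad K < 1\<close>, of s]
      by (metis diameter_empty diameter_singleton subset_singletonD)
    then show ?thesis using r by simp
  next
    case False
    then have "- a \<notin> cyl \<iota> K s"
      using Cons.prems cyl_subset by (meson list.set_intros(1) subsetD)
    then have "diameter (cyl \<iota> K (a # s)) \<le> rad K ^ 2 * diameter (cyl \<iota> K s)"
      using diameter_cyl_Cons_le[OF \<open>bounded K\<close>] by blast
    also have "\<dots> \<le> rad K ^ 2 * (2 * rad K ^ (2 * length s + 1))"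
      using Cons by (intro mult_left_mono) auto
    also have "\<dots> = 2 * rad K ^ (2 * length (a # s) + 1)"
      by (simp add: power_add power2_eq_square)
    finally show ?thesis .
  qed
qed

end

lemma sigma_le:
  assumes "0 \<in> Z" and "\<And>s. set s \<subseteq> Z \<Longrightarrow> length s = m \<Longrightarrow> diameter (cyl \<iota> K s) \<le> b"
  shows "sigma \<iota> Z K m \<le> b"
  unfolding sigma_def
  using assms by (intro cSup_least) (auto intro!: exI[of _ "replicate m 0"])

lemma sigma_nonneg:
  assumes "0 \<in> Z" "bounded K"
    and "\<And>s. set s \<subseteq> Z \<Longrightarrow> length s = m \<Longrightarrow> diameter (cyl \<iota> K s) \<le> b"
  shows "0 \<le> sigma \<iota> Z K m"
proof -
  let ?s = "replicate m (0 :: 'a)"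
  have "0 \<le> diameter (cyl \<iota> K ?s)"
    using diameter_ge_0 bounded_subset[OF \<open>bounded K\<close> cyl_subset] by blast
  also have "\<dots> \<le> sigma \<iota> Z K m"
    unfolding sigma_def
    using assms by (intro cSup_upper) (auto intro!: bdd_aboveI[of _ b])
  finally show ?thesis .
qed

theorem lemma4p5:
  fixes \<iota> :: "'a::euclidean_space \<Rightarrow> 'a" and Z K :: "'a set"
  assumes inv_nz: "\<And>x. x \<noteq> 0 \<Longrightarrow> \<iota> x \<noteq> 0"
    and inv_norm: "\<And>x. x \<noteq> 0 \<Longrightarrow> norm (\<iota> x) = 1 / norm x"
    and inv_dist: "\<And>x y. x \<noteq> 0 \<Longrightarrow> y \<noteq> 0 \<Longrightarrow>
                      dist (\<iota> x) (\<iota> y) = dist x y / (norm x * norm y)"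
    and inv_inv: "\<And>x. x \<noteq> 0 \<Longrightarrow> \<iota> (\<iota> x) = x"
    and inv_0: "\<iota> 0 = 0"
    and Z_0: "0 \<in> Z"
    and Z_add: "\<And>x y. x \<in> Z \<Longrightarrow> y \<in> Z \<Longrightarrow> x + y \<in> Z"
    and Z_uminus: "\<And>x. x \<in> Z \<Longrightarrow> - x \<in> Z"
    and Z_discrete: "\<exists>e>0. \<forall>z\<in>Z. z \<noteq> 0 \<longrightarrow> e \<le> norm z"
    and Z_cocompact: "\<exists>C. compact C \<and> (\<forall>x. \<exists>z\<in>Z. x - z \<in> C)"
    and K_sub: "K \<subseteq> dirichlet Z"
    and K_sup: "interior (dirichlet Z) \<subseteq> K"
    and K_fund: "\<And>x. \<exists>!z. z \<in> Z \<and> x - z \<in> K"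
    and norm_euclidean: "rad K < 1"
  shows "(\<forall>m\<ge>1. sigma \<iota> Z K m \<le> 2 * rad K ^ (2 * m + 1))
         \<and> (sigma \<iota> Z K \<longlonglongrightarrow> 0)"
proof -
  interpret inversion \<iota> using inv_nz inv_norm inv_dist inv_inv inv_0 by unfold_locales
  have bounded: "bounded K"
    using Z_cocompact bounded_dirichlet bounded_subset[OF _ K_sub] by metis
  have nonempty: "K \<noteq> {}" using K_fund by blast
  have digits: "a = 0" if "a \<in> Z" "- a \<in> K" for a
    using dirichlet_lattice_point_eq_0[of "- a" Z] that K_sub Z_uminus by auto
  have diameter: "diameter (cyl \<iota> K s) \<le> 2 * rad K ^ (2 * m + 1)"
    if "set s \<subseteq> Z" "length s = m" for s m
    using diameter_cyl_le[OF bounded nonempty norm_euclidean] digits that by blast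
  have sigma: "0 \<le> sigma \<iota> Z K m \<and> sigma \<iota> Z K m \<le> 2 * rad K ^ (2 * m + 1)" for m
    using sigma_nonneg[OF Z_0 bounded diameter] sigma_le[OF Z_0 diameter] by blast
  have "norm (rad K) < 1"
    using norm_euclidean rad_nonneg[OF bounded nonempty] by simp
  then have "((\<lambda>n. rad K ^ n) \<circ> (\<lambda>m. 2 * m + 1)) \<longlonglongrightarrow> 0"
    by (intro LIMSEQ_subseq_LIMSEQ LIMSEQ_power_zero) (auto intro: strict_monoI)
  then have bound_limit: "(\<lambda>m. 2 * rad K ^ (2 * m + 1)) \<longlonglongrightarrow> 0"
    unfolding comp_def by (rule tendsto_mult_right_zero)
  have "sigma \<iota> Z K \<longlonglongrightarrow> 0"
    using sigma by (auto intro!: tendsto_sandwich[OF _ _ tendsto_const bound_limit])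
  then show ?thesis using sigma by blast
qed

end
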